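(* Let $C_1$ and $C_2$ be finite order SISO deterministic programs, both with uniformly distributed secret input, with output distribution vectors $\mathbf{p}_N$ and $\mathbf{p}'_N$ and output sets $\mathcal{O}_N$ and $\mathcal{O}'_N$ respectively. Assume $|\mathcal{O}'_N|\ge 2$ for all sufficiently large $N$. For $\alpha\in(0,\infty]$ let $$f_\alpha=\limsup_{N\to\infty}\frac{IL_\alpha(C_1,N)}{IL_\alpha(C_2,N)},\qquad g_\alpha=\liminf_{N\to\infty}\frac{IL_\alpha(C_1,N)}{IL_\alpha(C_2,N)}.$$ Then, with $\alpha,\beta$ ranging over $(0,\infty]$: 1. (a) $f_\alpha=0$ for some $\alpha$ if and only if $f_\beta=0$ for all $\beta$. (b) $f_\alpha=\infty$ for some $\alpha$ if and only if $f_\beta=\infty$ for all $\beta$. (c) $0<f_\alpha<\infty$ for some $\alpha$ if and only if $0<f_\beta<\infty$ for all $\beta$. 2. (a) $g_\alpha=0$ for some $\alpha$ if and only if $g_\beta=0$ for all $\beta$. (b) $g_\alpha=\infty$ for some $\alpha$ if and only if $g_\beta=\infty$ for all $\beta$. (c) $0<g_\alpha<\infty$ for some $\alpha$ if and only if $0<g_\beta<\infty$ for all $\beta$.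
   Context: A SISO deterministic program $C$ is a family indexed by $N\in\mathbb{N}^+$: for each $N$, a random variable $A$ uniformly distributed on $\mathcal{A}_N=\{0,1,\dots,N-1\}$, and a surjective map $F_N$ from $\mathcal{A}_N$ onto a finite set $\mathcal{O}_N$. The output is $O=F_N(A)$, and $\mathbf{p}_N$ denotes its distribution vector, so $\mathbf{p}_N(o)=|F_N^{-1}(o)|/N$. $C$ is of finite order if $\sup_N\|\mathbf{p}_N\|_0<\infty$, where $\|\mathbf{p}\|_0$ is the number of nonzero entries of $\mathbf{p}$. For a probability vector $\mathbf{p}$ and $\alpha\in(0,\infty]$, the Rényi entropy is $H_\alpha(\mathbf{p})=\frac{1}{1-\alpha}\log\sum_i p_i^\alpha$ for $\alpha\notin\{1,\infty\}$. The limiting cases are $H_1(\mathbf{p})=-\sum_i p_i\log p_i$ and $H_\infty(\mathbf{p})=-\log\max_i p_i$. The $\alpha$-information leakage is $IL_\alpha(C,N)=H_\alpha(\mathbf{p}_N)$. Both programs are evaluated at the same $N$. *)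

theory Defs
  imports "HOL-Analysis.Analysis"
begin

text \<open>A SISO deterministic program is represented by the family F, where F N is the
map from the secret input set {..<N} (uniformly distributed) to outputs; only the
values of F N on {..<N} matter.\<close>

definition outputs :: "(nat \<Rightarrow> nat \<Rightarrow> 'o) \<Rightarrow> nat \<Rightarrow> 'o set" where
  "outputs F N = F N ` {..<N}"

definition out_dist :: "(nat \<Rightarrow> nat \<Rightarrow> 'o) \<Rightarrow> nat \<Rightarrow> 'o \<Rightarrow> real" where
  "out_dist F N x = real (card {a \<in> {..<N}. F N a = x}) / real N"

definition finite_order :: "(nat \<Rightarrow> nat \<Rightarrow> 'o) \<Rightarrow> bool" where
  "finite_order F \<longleftrightarrow> (\<exists>K. \<forall>N>0. card {x. out_dist F N x \<noteq> 0} \<le> K)"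

definition renyi :: "ereal \<Rightarrow> ('o \<Rightarrow> real) \<Rightarrow> 'o set \<Rightarrow> real" where
  "renyi \<alpha> p S =
     (if \<alpha> = \<infinity> then - ln (Max (p ` S))
      else if \<alpha> = 1 then - (\<Sum>x\<in>S. p x * ln (p x))
      else (1 / (1 - real_of_ereal \<alpha>)) * ln (\<Sum>x\<in>S. p x powr real_of_ereal \<alpha>))"

definition IL :: "ereal \<Rightarrow> (nat \<Rightarrow> nat \<Rightarrow> 'o) \<Rightarrow> nat \<Rightarrow> real" where
  "IL \<alpha> F N = renyi \<alpha> (out_dist F N) (outputs F N)"

end

theory Submission
  imports Defs
begin

text \<open>Let \<open>s = 1 - max p\<close> be the error probability of the best single guess of the output.
For a distribution with at most \<open>K\<close> atoms, up to factors depending only on \<open>\<alpha>\<close> and \<open>K\<close>,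
the Renyi entropy \<open>H\<^sub>\<alpha>\<close> is \<open>s\<close> for \<open>\<alpha> > 1\<close> (including \<open>\<alpha> = \<infinity>\<close>), \<open>s\<^sup>\<alpha>\<close> for \<open>\<alpha> < 1\<close>,
and \<open>s (1 - ln s)\<close> for \<open>\<alpha> = 1\<close>. Consequently, for every \<open>\<alpha>\<close> the ratio of the leakages of the two
programs lies between \<open>c min(r, r\<^sup>\<gamma>)\<close> and \<open>C max(r, r\<^sup>\<gamma>)\<close>, where \<open>r = s\<^sub>1 / s\<^sub>2\<close> does not depend
on \<open>\<alpha>\<close>. Such two-sided power bounds preserve whether a limit superior or inferior is \<open>0\<close>,
finite and positive, or \<open>\<infinity>\<close>.\<close>

section \<open>Limits superior and inferior of nonnegative sequences\<close>

lemma Limsup_ereal_eq_0_iff: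
  fixes x :: "'i \<Rightarrow> real"
  assumes "F \<noteq> bot" and "\<forall>\<^sub>F i in F. 0 \<le> x i"
  shows "Limsup F (\<lambda>i. ereal (x i)) = 0 \<longleftrightarrow> (\<forall>e>0. \<forall>\<^sub>F i in F. x i < e)"
proof
  assume lim: "Limsup F (\<lambda>i. ereal (x i)) = 0"
  show "\<forall>e>0. \<forall>\<^sub>F i in F. x i < e"
  proof (intro allI impI)
    fix e :: real
    assume "0 < e"
    with lim have "Limsup F (\<lambda>i. ereal (x i)) < ereal e"
      by simp
    then show "\<forall>\<^sub>F i in F. x i < e"
      by (auto dest: Limsup_lessD elim!: eventually_mono)
  qed
next
  assume small: "\<forall>e>0. \<forall>\<^sub>F i in F. x i < e"
  have "Limsup F (\<lambda>i. ereal (x i)) \<le> 0"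
  proof (unfold Limsup_le_iff, intro allI impI)
    fix y :: ereal
    assume "0 < y"
    then obtain e where "0 < e" "ereal e \<le> y"
      by (cases y) (auto intro: that[of 1])
    from small \<open>0 < e\<close> have "\<forall>\<^sub>F i in F. x i < e"
      by blast
    then show "\<forall>\<^sub>F i in F. ereal (x i) < y"
      by eventually_elim (rule less_le_trans[OF _ \<open>ereal e \<le> y\<close>], simp)
  qed
  moreover have "0 \<le> Limsup F (\<lambda>i. ereal (x i))"
    using assms by (intro le_Limsup) (auto elim!: eventually_mono)
  ultimately show "Limsup F (\<lambda>i. ereal (x i)) = 0"
    by simp
qed

lemma Limsup_ereal_less_PInf_iff:
  fixes x :: "'i \<Rightarrow> real"
  shows "Limsup F (\<lambda>i. ereal (x i)) < \<infinity> \<longleftrightarrow> (\<exists>M. \<forall>\<^sub>F i in F. x i \<le> M)"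
proof
  assume "Limsup F (\<lambda>i. ereal (x i)) < \<infinity>"
  then obtain M where "Limsup F (\<lambda>i. ereal (x i)) < ereal M"
    using ereal_dense2 by blast
  then have "\<forall>\<^sub>F i in F. x i \<le> M"
    by (auto dest: Limsup_lessD elim!: eventually_mono)
  then show "\<exists>M. \<forall>\<^sub>F i in F. x i \<le> M" ..
next
  assume "\<exists>M. \<forall>\<^sub>F i in F. x i \<le> M"
  then obtain M where "\<forall>\<^sub>F i in F. ereal (x i) \<le> ereal M"
    by auto
  then have "Limsup F (\<lambda>i. ereal (x i)) \<le> ereal M"
    by (rule Limsup_bounded)
  then show "Limsup F (\<lambda>i. ereal (x i)) < \<infinity>"
    by (rule le_less_trans) simp
qed

lemma Liminf_ereal_eq_0_iff:
  fixes x :: "'i \<Rightarrow> real"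
  assumes "\<forall>\<^sub>F i in F. 0 \<le> x i"
  shows "Liminf F (\<lambda>i. ereal (x i)) = 0 \<longleftrightarrow> (\<forall>e>0. \<exists>\<^sub>F i in F. x i < e)"
proof
  assume lim: "Liminf F (\<lambda>i. ereal (x i)) = 0"
  show "\<forall>e>0. \<exists>\<^sub>F i in F. x i < e"
  proof (intro allI impI)
    fix e :: real
    assume "0 < e"
    show "\<exists>\<^sub>F i in F. x i < e"
    proof (rule ccontr)
      assume "\<not> (\<exists>\<^sub>F i in F. x i < e)"
      then have "\<forall>\<^sub>F i in F. ereal e \<le> ereal (x i)"
        by (simp add: not_frequently not_less)
      then have "ereal e \<le> Liminf F (\<lambda>i. ereal (x i))"
        by (rule Liminf_bounded)
      with lim \<open>0 < e\<close> show False
        by simp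
    qed
  qed
next
  assume small: "\<forall>e>0. \<exists>\<^sub>F i in F. x i < e"
  have "0 \<le> Liminf F (\<lambda>i. ereal (x i))"
    using assms by (intro Liminf_bounded) (auto elim!: eventually_mono)
  moreover have "\<not> 0 < Liminf F (\<lambda>i. ereal (x i))"
  proof
    assume "0 < Liminf F (\<lambda>i. ereal (x i))"
    then obtain e where e: "0 < ereal e" "ereal e < Liminf F (\<lambda>i. ereal (x i))"
      using ereal_dense2 by blast
    then have "\<forall>\<^sub>F i in F. \<not> x i < e"
      by (auto dest: less_LiminfD elim!: eventually_mono)
    moreover have "\<exists>\<^sub>F i in F. x i < e"
      using small e(1) by simp
    ultimately show False
      by (simp add: not_frequently[symmetric])
  qed
  ultimately show "Liminf F (\<lambda>i. ereal (x i)) = 0"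
    by simp
qed

lemma Liminf_ereal_less_PInf_iff:
  fixes x :: "'i \<Rightarrow> real"
  shows "Liminf F (\<lambda>i. ereal (x i)) < \<infinity> \<longleftrightarrow> (\<exists>M. \<exists>\<^sub>F i in F. x i \<le> M)"
proof
  assume "Liminf F (\<lambda>i. ereal (x i)) < \<infinity>"
  then obtain M where M: "Liminf F (\<lambda>i. ereal (x i)) < ereal M"
    using ereal_dense2 by blast
  have "\<exists>\<^sub>F i in F. x i \<le> M"
  proof (rule ccontr)
    assume "\<not> (\<exists>\<^sub>F i in F. x i \<le> M)"
    then have "\<forall>\<^sub>F i in F. ereal M \<le> ereal (x i)"
      by (auto simp: not_frequently elim!: eventually_mono)
    then have "ereal M \<le> Liminf F (\<lambda>i. ereal (x i))"
      by (rule Liminf_bounded)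
    with M show False
      by simp
  qed
  then show "\<exists>M. \<exists>\<^sub>F i in F. x i \<le> M" ..
next
  assume "\<exists>M. \<exists>\<^sub>F i in F. x i \<le> M"
  then obtain M where M: "\<exists>\<^sub>F i in F. x i \<le> M" ..
  show "Liminf F (\<lambda>i. ereal (x i)) < \<infinity>"
  proof (rule ccontr)
    assume "\<not> Liminf F (\<lambda>i. ereal (x i)) < \<infinity>"
    then have "ereal M < Liminf F (\<lambda>i. ereal (x i))"
      by simp
    then have "\<forall>\<^sub>F i in F. \<not> x i \<le> M"
      by (auto dest: less_LiminfD elim!: eventually_mono)
    with M show False
      by (simp add: not_frequently[symmetric])
  qed
qed

section \<open>Power comparability\<close>

text \<open>Nonnegativity of \<open>r\<close> is part of the definition because \<open>powr\<close> is junk on negative reals.\<close>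

definition power_dominated :: "'i filter \<Rightarrow> ('i \<Rightarrow> real) \<Rightarrow> ('i \<Rightarrow> real) \<Rightarrow> bool" where
  "power_dominated F x r \<longleftrightarrow> (\<exists>C \<gamma>. 0 < C \<and> 0 < \<gamma> \<and>
     (\<forall>\<^sub>F i in F. 0 \<le> x i \<and> 0 \<le> r i \<and> x i \<le> C * max (r i) (r i powr \<gamma>)))"

definition power_comparable :: "'i filter \<Rightarrow> ('i \<Rightarrow> real) \<Rightarrow> ('i \<Rightarrow> real) \<Rightarrow> bool" where
  "power_comparable F x r \<longleftrightarrow> power_dominated F x r \<and> power_dominated F r x"

lemma max_powr_less_if_small:
  fixes C \<gamma> e :: real
  assumes "0 < C" "0 < \<gamma>" "0 < e"
  obtains \<delta> where "0 < \<delta>" "\<And>t. 0 \<le> t \<Longrightarrow> t < \<delta> \<Longrightarrow> C * max t (t powr \<gamma>) < e"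
proof
  define \<epsilon> where "\<epsilon> = e / C"
  have "0 < \<epsilon>"
    using assms by (simp add: \<epsilon>_def)
  then show "0 < min \<epsilon> (\<epsilon> powr (1 / \<gamma>))"
    by simp
  fix t :: real
  assume "0 \<le> t" "t < min \<epsilon> (\<epsilon> powr (1 / \<gamma>))"
  then have "t powr \<gamma> < (\<epsilon> powr (1 / \<gamma>)) powr \<gamma>"
    using assms by (intro powr_less_mono2) auto
  also have "\<dots> = \<epsilon>"
    using \<open>0 < \<epsilon>\<close> \<open>0 < \<gamma>\<close> by (simp add: powr_powr)
  finally have "max t (t powr \<gamma>) < \<epsilon>"
    using \<open>t < min \<epsilon> _\<close> by simp
  then have "C * max t (t powr \<gamma>) < C * \<epsilon>"
    using \<open>0 < C\<close> by simp
  then show "C * max t (t powr \<gamma>) < e"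
    using \<open>0 < C\<close> by (simp add: \<epsilon>_def)
qed

lemma max_powr_mono:
  fixes t u \<gamma> :: real
  assumes "0 \<le> t" "t \<le> u" "0 \<le> \<gamma>"
  shows "max t (t powr \<gamma>) \<le> max u (u powr \<gamma>)"
  using assms powr_mono2[of \<gamma> t u] by linarith

lemma le_max_powr_if_min_powr_le:
  fixes t u \<gamma> :: real
  assumes "0 \<le> t" "0 < \<gamma>" "min t (t powr \<gamma>) \<le> u"
  shows "t \<le> max u (u powr (1 / \<gamma>))"
proof (cases "t \<le> u")
  case False
  then have "t powr \<gamma> \<le> u"
    using assms(3) by linarith
  then have "(t powr \<gamma>) powr (1 / \<gamma>) \<le> u powr (1 / \<gamma>)"
    using assms by (intro powr_mono2) auto
  then show ?thesis
    using assms by (simp add: powr_powr)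
qed simp

lemma power_dominated_transfer:
  assumes "power_dominated F x r"
  shows "(\<forall>e>0. \<forall>\<^sub>F i in F. r i < e) \<Longrightarrow> (\<forall>e>0. \<forall>\<^sub>F i in F. x i < e)"
    and "(\<forall>e>0. \<exists>\<^sub>F i in F. r i < e) \<Longrightarrow> (\<forall>e>0. \<exists>\<^sub>F i in F. x i < e)"
    and "(\<exists>M. \<forall>\<^sub>F i in F. r i \<le> M) \<Longrightarrow> (\<exists>M. \<forall>\<^sub>F i in F. x i \<le> M)"
    and "(\<exists>M. \<exists>\<^sub>F i in F. r i \<le> M) \<Longrightarrow> (\<exists>M. \<exists>\<^sub>F i in F. x i \<le> M)"
proof -
  obtain C \<gamma> where C: "0 < C" and \<gamma>: "0 < \<gamma>"
    and dom: "\<forall>\<^sub>F i in F. 0 \<le> x i \<and> 0 \<le> r i \<and> x i \<le> C * max (r i) (r i powr \<gamma>)"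
    using assms unfolding power_dominated_def by blast
  have small: "\<forall>\<^sub>F i in F. r i < \<delta> \<longrightarrow> x i < e"
    if "\<And>t. 0 \<le> t \<Longrightarrow> t < \<delta> \<Longrightarrow> C * max t (t powr \<gamma>) < e" for \<delta> e
    using dom by eventually_elim (use that in fastforce)
  have bounded: "\<forall>\<^sub>F i in F. r i \<le> M \<longrightarrow> x i \<le> C * max M (M powr \<gamma>)" for M
    using dom
  proof eventually_elim
    case (elim i)
    then show ?case
      using max_powr_mono[of "r i" M \<gamma>] C \<gamma> by (auto intro: order_trans mult_left_mono)
  qed
  show "\<forall>e>0. \<forall>\<^sub>F i in F. x i < e" if "\<forall>e>0. \<forall>\<^sub>F i in F. r i < e"
  proof (intro allI impI)
    fix e :: real
    assume "0 < e"
    obtain \<delta> where "0 < \<delta>" "\<And>t. 0 \<le> t \<Longrightarrow> t < \<delta> \<Longrightarrow> C * max t (t powr \<gamma>) < e"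
      using max_powr_less_if_small[OF C \<gamma> \<open>0 < e\<close>] by blast
    with that small show "\<forall>\<^sub>F i in F. x i < e"
      by (blast intro: eventually_rev_mp)
  qed
  show "\<forall>e>0. \<exists>\<^sub>F i in F. x i < e" if "\<forall>e>0. \<exists>\<^sub>F i in F. r i < e"
  proof (intro allI impI)
    fix e :: real
    assume "0 < e"
    obtain \<delta> where "0 < \<delta>" "\<And>t. 0 \<le> t \<Longrightarrow> t < \<delta> \<Longrightarrow> C * max t (t powr \<gamma>) < e"
      using max_powr_less_if_small[OF C \<gamma> \<open>0 < e\<close>] by blast
    with that small show "\<exists>\<^sub>F i in F. x i < e"
      by (blast intro: frequently_rev_mp)
  qed
  show "\<exists>M. \<forall>\<^sub>F i in F. x i \<le> M" if "\<exists>M. \<forall>\<^sub>F i in F. r i \<le> M"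
    using that bounded by (blast intro: eventually_rev_mp)
  show "\<exists>M. \<exists>\<^sub>F i in F. x i \<le> M" if "\<exists>M. \<exists>\<^sub>F i in F. r i \<le> M"
    using that bounded by (blast intro: frequently_rev_mp)
qed

lemma power_dominated_nonneg:
  assumes "power_dominated F x r"
  shows "\<forall>\<^sub>F i in F. 0 \<le> x i" and "\<forall>\<^sub>F i in F. 0 \<le> r i"
  using assms unfolding power_dominated_def by (auto elim!: eventually_mono)

lemma power_dominated_if_lower_bound:
  fixes c \<gamma> :: real
  assumes "0 < c" "0 < \<gamma>"
    and lower: "\<forall>\<^sub>F i in F. 0 \<le> r i \<and> c * min (r i) (r i powr \<gamma>) \<le> x i"
  shows "power_dominated F r x"
proof -
  define C where "C = max (1 / c) ((1 / c) powr (1 / \<gamma>))"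
  have bound: "0 \<le> r \<and> 0 \<le> x \<and> r \<le> C * max x (x powr (1 / \<gamma>))"
    if "0 \<le> r" "c * min r (r powr \<gamma>) \<le> x" for r x :: real
  proof -
    have "0 \<le> c * min r (r powr \<gamma>)"
      using that(1) \<open>0 < c\<close> by simp
    then have "0 \<le> x"
      using that(2) by linarith
    have "r \<le> max (x / c) ((x / c) powr (1 / \<gamma>))"
      using that \<open>0 < c\<close> \<open>0 < \<gamma>\<close> by (intro le_max_powr_if_min_powr_le) (auto simp: field_simps)
    also have "\<dots> = max ((1 / c) * x) ((1 / c) powr (1 / \<gamma>) * x powr (1 / \<gamma>))"
      by (simp add: powr_divide)
    also have "\<dots> \<le> C * max x (x powr (1 / \<gamma>))"
      unfolding C_def using \<open>0 \<le> x\<close> \<open>0 < c\<close>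
      by (intro max.boundedI mult_mono) (auto simp: le_max_iff_disj)
    finally show ?thesis
      using \<open>0 \<le> r\<close> \<open>0 \<le> x\<close> by blast
  qed
  have "0 < C"
    using \<open>0 < c\<close> by (simp add: C_def less_max_iff_disj)
  moreover have "\<forall>\<^sub>F i in F. 0 \<le> r i \<and> 0 \<le> x i \<and> r i \<le> C * max (x i) (x i powr (1 / \<gamma>))"
    using lower by eventually_elim (use bound in blast)
  ultimately show ?thesis
    unfolding power_dominated_def using \<open>0 < \<gamma>\<close> by (intro exI[of _ C] exI[of _ "1 / \<gamma>"]) auto
qed

lemma power_dominated_Limsup_Liminf:
  fixes x r :: "'i \<Rightarrow> real"
  assumes dom: "power_dominated F x r" and "F \<noteq> bot"
  shows "Limsup F (\<lambda>i. ereal (r i)) = 0 \<Longrightarrow> Limsup F (\<lambda>i. ereal (x i)) = 0"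
    and "Limsup F (\<lambda>i. ereal (r i)) < \<infinity> \<Longrightarrow> Limsup F (\<lambda>i. ereal (x i)) < \<infinity>"
    and "Liminf F (\<lambda>i. ereal (r i)) = 0 \<Longrightarrow> Liminf F (\<lambda>i. ereal (x i)) = 0"
    and "Liminf F (\<lambda>i. ereal (r i)) < \<infinity> \<Longrightarrow> Liminf F (\<lambda>i. ereal (x i)) < \<infinity>"
  using power_dominated_transfer[OF dom] power_dominated_nonneg[OF dom]
    Limsup_ereal_eq_0_iff[OF \<open>F \<noteq> bot\<close>] Liminf_ereal_eq_0_iff
    Limsup_ereal_less_PInf_iff Liminf_ereal_less_PInf_iff
  by metis+

lemma power_comparable_Limsup_Liminf:
  fixes x r :: "'i \<Rightarrow> real"
  assumes "power_comparable F x r" and "F \<noteq> bot"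
  shows "Limsup F (\<lambda>i. ereal (x i)) = 0 \<longleftrightarrow> Limsup F (\<lambda>i. ereal (r i)) = 0"
    and "Limsup F (\<lambda>i. ereal (x i)) = \<infinity> \<longleftrightarrow> Limsup F (\<lambda>i. ereal (r i)) = \<infinity>"
    and "Liminf F (\<lambda>i. ereal (x i)) = 0 \<longleftrightarrow> Liminf F (\<lambda>i. ereal (r i)) = 0"
    and "Liminf F (\<lambda>i. ereal (x i)) = \<infinity> \<longleftrightarrow> Liminf F (\<lambda>i. ereal (r i)) = \<infinity>"
    and "0 \<le> Limsup F (\<lambda>i. ereal (x i))"
    and "0 \<le> Liminf F (\<lambda>i. ereal (x i))"
proof -
  have xr: "power_dominated F x r" and rx: "power_dominated F r x"
    using assms(1) unfolding power_comparable_def by blast+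
  show "Limsup F (\<lambda>i. ereal (x i)) = 0 \<longleftrightarrow> Limsup F (\<lambda>i. ereal (r i)) = 0"
    and "Liminf F (\<lambda>i. ereal (x i)) = 0 \<longleftrightarrow> Liminf F (\<lambda>i. ereal (r i)) = 0"
    using power_dominated_Limsup_Liminf[OF xr assms(2)] power_dominated_Limsup_Liminf[OF rx assms(2)]
    by blast+
  show "Limsup F (\<lambda>i. ereal (x i)) = \<infinity> \<longleftrightarrow> Limsup F (\<lambda>i. ereal (r i)) = \<infinity>"
    and "Liminf F (\<lambda>i. ereal (x i)) = \<infinity> \<longleftrightarrow> Liminf F (\<lambda>i. ereal (r i)) = \<infinity>"
    using power_dominated_Limsup_Liminf[OF xr assms(2)] power_dominated_Limsup_Liminf[OF rx assms(2)]
    by (metis less_top top_ereal_def)+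
  show "0 \<le> Limsup F (\<lambda>i. ereal (x i))"
    using power_dominated_nonneg(1)[OF xr] assms(2) by (intro le_Limsup) (auto elim!: eventually_mono)
  show "0 \<le> Liminf F (\<lambda>i. ereal (x i))"
    using power_dominated_nonneg(1)[OF xr] by (intro Liminf_bounded) (auto elim!: eventually_mono)
qed

lemma power_comparable_if_bounds:
  fixes c C \<gamma> :: real
  assumes "0 < c" "0 < C" "0 < \<gamma>"
    and bounds: "\<forall>\<^sub>F i in F. 0 \<le> r i \<and> c * min (r i) (r i powr \<gamma>) \<le> x i \<and> x i \<le> C * max (r i) (r i powr \<gamma>)"
  shows "power_comparable F x r"
proof -
  have "power_dominated F r x"
    using assms(1,3) by (rule power_dominated_if_lower_bound) (use bounds in \<open>auto elim!: eventually_mono\<close>)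
  moreover have "\<forall>\<^sub>F i in F. 0 \<le> x i \<and> 0 \<le> r i \<and> x i \<le> C * max (r i) (r i powr \<gamma>)"
    using bounds by eventually_elim (use \<open>0 < c\<close> in \<open>auto intro: order_trans[rotated]\<close>)
  ultimately show ?thesis
    unfolding power_comparable_def power_dominated_def using assms(2,3) by blast
qed

lemma powr_eq_mult_powr_minus_1: "0 < x \<Longrightarrow> x powr a = x * x powr (a - 1)" for x a :: real
  by (simp add: powr_diff)

lemma half_le_ln_one_plus: "0 \<le> w \<Longrightarrow> w \<le> 1 \<Longrightarrow> w / 2 \<le> ln (1 + w)" for w :: real
proof -
  assume w: "0 \<le> w" "w \<le> 1"
  have "- ln (1 + w) \<le> 1 / (1 + w) - 1"
    using ln_le_minus_one[of "1 / (1 + w)"] w by (simp add: ln_div)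
  then have "w / (1 + w) \<le> ln (1 + w)"
    using w by (simp add: field_simps)
  moreover have "w / 2 \<le> w / (1 + w)"
    using w by (intro divide_left_mono) auto
  ultimately show ?thesis
    by linarith
qed

lemma ln_le_two_sqrt: "0 < r \<Longrightarrow> ln r \<le> 2 * sqrt r" for r :: real
  using ln_le_minus_one[of "sqrt r"] by (simp add: ln_sqrt)

lemma mult_neg_ln_le_two_sqrt: "0 < r \<Longrightarrow> r * - ln r \<le> 2 * sqrt r" for r :: real
proof -
  assume "0 < r"
  then have "- ln r \<le> 2 / sqrt r"
    using ln_le_two_sqrt[of "1 / r"] by (simp add: ln_div real_sqrt_divide)
  then have "r * - ln r \<le> r * (2 / sqrt r)"
    using \<open>0 < r\<close> by (intro mult_left_mono) auto
  also have "\<dots> = 2 * (r / sqrt r)"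
    by simp
  finally show ?thesis
    using \<open>0 < r\<close> by (simp add: real_div_sqrt)
qed

lemma le_sqrt_if_le_1: "0 \<le> r \<Longrightarrow> r \<le> 1 \<Longrightarrow> r \<le> sqrt r" for r :: real
  by (intro real_le_rsqrt) (simp add: power2_eq_square mult_left_le)

section \<open>Renyi entropies of distributions with bounded support\<close>

definition guess_error :: "('a \<Rightarrow> real) \<Rightarrow> 'a set \<Rightarrow> real" where
  "guess_error p S = 1 - Max (p ` S)"

locale bounded_distribution =
  fixes p :: "'a \<Rightarrow> real" and S :: "'a set" and mode :: 'a and K :: real
  assumes finite_support: "finite S"
    and positive: "\<And>x. x \<in> S \<Longrightarrow> 0 < p x"
    and sum_eq_1: "sum p S = 1"
    and mode_in: "mode \<in> S"
    and le_mode: "\<And>x. x \<in> S \<Longrightarrow> p x \<le> p mode"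
    and card_le: "real (card S) \<le> K"
begin

abbreviation m :: real where "m \<equiv> p mode"
abbreviation s :: real where "s \<equiv> 1 - p mode"
abbreviation R :: "'a set" where "R \<equiv> S - {mode}"

lemma mode_pos: "0 < m"
  using positive mode_in by blast

lemma mode_le_1: "m \<le> 1"
  using member_le_sum[of mode S p] finite_support positive mode_in sum_eq_1
  by (simp add: less_imp_le)

lemma one_le_K_mode: "1 \<le> K * m"
proof -
  have "sum p S \<le> real (card S) * m"
    using le_mode by (rule sum_bounded_above)
  also have "\<dots> \<le> K * m"
    using card_le mode_pos by (intro mult_right_mono) auto
  finally show ?thesis
    using sum_eq_1 by simp
qed

lemma one_le_K: "1 \<le> K"
proof -
  have "0 \<le> K"
    using card_le of_nat_0_le_iff order_trans by blast
  then have "K * m \<le> K"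
    using mode_le_1 by (simp add: mult_left_le)
  then show ?thesis
    using one_le_K_mode by linarith
qed

lemma guess_error_eq: "guess_error p S = s"
  unfolding guess_error_def using finite_support mode_in le_mode
  by (subst Max_eqI) auto

lemma guess_error_nonneg: "0 \<le> s"
  using mode_le_1 by simp

lemma guess_error_le: "s \<le> 1 - 1 / K"
  using one_le_K_mode one_le_K by (simp add: field_simps)

lemma sum_rest: "sum p R = s"
  using sum_eq_1 mode_in finite_support by (simp add: sum_diff1)

lemma rest_le: "x \<in> R \<Longrightarrow> p x \<le> s"
  using member_le_sum[of x R p] positive finite_support sum_rest by (simp add: less_imp_le)

lemma card_rest_le: "real (card R) \<le> K"
  using card_Diff1_le[of S mode] card_le by linarith

lemma guess_error_pos: "2 \<le> card S \<Longrightarrow> 0 < s"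
proof -
  assume "2 \<le> card S"
  moreover have "card R = card S - 1"
    using mode_in finite_support by (simp add: card_Diff_singleton)
  ultimately have "R \<noteq> {}"
    using card_gt_0_iff[of R] by linarith
  then have "0 < sum p R"
    using finite_support positive by (intro sum_pos) auto
  then show ?thesis
    using sum_rest by simp
qed

lemma renyi_infinity_eq: "renyi \<infinity> p S = - ln m"
  unfolding renyi_def using finite_support mode_in le_mode by (subst Max_eqI) auto

lemma renyi_infinity_bounds: "s \<le> renyi \<infinity> p S" "renyi \<infinity> p S \<le> K * s"
proof -
  show "s \<le> renyi \<infinity> p S"
    using ln_le_minus_one[OF mode_pos] by (simp add: renyi_infinity_eq)
  have "- ln m \<le> 1 / m - 1"
    using ln_le_minus_one[of "1 / m"] mode_pos by (simp add: ln_div)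
  also have "\<dots> = s * (1 / m)"
    using mode_pos by (simp add: field_simps)
  also have "\<dots> \<le> s * K"
    using one_le_K_mode mode_pos guess_error_nonneg by (intro mult_left_mono) (auto simp: field_simps)
  finally show "renyi \<infinity> p S \<le> K * s"
    by (simp add: renyi_infinity_eq mult.commute)
qed

lemma sum_powr_split: "(\<Sum>x\<in>S. p x powr a) = m powr a + (\<Sum>x\<in>R. p x powr a)"
  using finite_support mode_in by (simp add: sum.remove)

lemma renyi_above_1_bounds:
  assumes a: "1 < a"
  shows "renyi \<infinity> p S \<le> renyi (ereal a) p S" "renyi (ereal a) p S \<le> a / (a - 1) * renyi \<infinity> p S"
proof -
  let ?T = "\<Sum>x\<in>S. p x powr a"
  have "1 / (1 - a) = - 1 / (a - 1)"
    using a by (simp add: field_simps)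
  then have renyi_a: "renyi (ereal a) p S = - ln ?T / (a - 1)"
    unfolding renyi_def using a by (simp add: one_ereal_def)
  have "?T = (\<Sum>x\<in>S. p x * p x powr (a - 1))"
    using positive by (intro sum.cong refl powr_eq_mult_powr_minus_1) auto
  also have "\<dots> \<le> (\<Sum>x\<in>S. p x * m powr (a - 1))"
    using positive le_mode a by (intro sum_mono mult_left_mono powr_mono2) (auto simp: less_imp_le)
  also have "\<dots> = m powr (a - 1)"
    using sum_eq_1 by (simp add: sum_distrib_right[symmetric])
  finally have upper: "?T \<le> m powr (a - 1)" .
  have lower: "m powr a \<le> ?T"
    using finite_support mode_in positive by (intro member_le_sum) (auto simp: less_imp_le)
  then have "0 < ?T"
    using mode_pos by (intro less_le_trans[OF _ lower]) simp
  then have ln_upper: "ln ?T \<le> (a - 1) * ln m" and ln_lower: "a * ln m \<le> ln ?T"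
    using upper lower mode_pos by (auto simp flip: ln_powr)
  have "(a - 1) * (- ln m) \<le> - ln ?T"
    using ln_upper by simp
  then show "renyi \<infinity> p S \<le> renyi (ereal a) p S"
    using a by (simp add: renyi_a renyi_infinity_eq pos_divide_le_eq mult.commute)
  have "- ln ?T / (a - 1) \<le> - (a * ln m) / (a - 1)"
    using ln_lower a by (intro divide_right_mono) auto
  then show "renyi (ereal a) p S \<le> a / (a - 1) * renyi \<infinity> p S"
    by (simp add: renyi_a renyi_infinity_eq)
qed

lemma sum_rest_powr_le: "0 \<le> a \<Longrightarrow> (\<Sum>x\<in>R. p x powr a) \<le> K * s powr a"
proof -
  assume "0 \<le> a"
  then have "(\<Sum>x\<in>R. p x powr a) \<le> (\<Sum>x\<in>R. s powr a)"
    using positive rest_le by (intro sum_mono powr_mono2) (auto simp: less_imp_le)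
  also have "\<dots> \<le> K * s powr a"
    using card_rest_le by (simp add: mult_right_mono)
  finally show ?thesis .
qed

lemma powr_le_sum_rest_powr: "a \<le> 1 \<Longrightarrow> s powr a \<le> (\<Sum>x\<in>R. p x powr a)"
proof (cases "s = 0")
  case False
  assume "a \<le> 1"
  have "0 < s"
    using False guess_error_nonneg by simp
  have "s powr a = (\<Sum>x\<in>R. p x) * s powr (a - 1)"
    using sum_rest powr_eq_mult_powr_minus_1[OF \<open>0 < s\<close>, of a] by simp
  also have "\<dots> = (\<Sum>x\<in>R. p x * s powr (a - 1))"
    by (rule sum_distrib_right)
  also have "\<dots> \<le> (\<Sum>x\<in>R. p x * p x powr (a - 1))"
  proof (rule sum_mono)
    fix x
    assume "x \<in> R"
    then have "0 < p x" "p x \<le> s"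
      using positive rest_le by auto
    then show "p x * s powr (a - 1) \<le> p x * p x powr (a - 1)"
      using \<open>a \<le> 1\<close> by (intro mult_left_mono powr_mono2') auto
  qed
  also have "\<dots> = (\<Sum>x\<in>R. p x powr a)"
    using positive by (intro sum.cong refl powr_eq_mult_powr_minus_1[symmetric]) auto
  finally show ?thesis .
qed (simp add: sum_nonneg)

lemma renyi_below_1_bounds:
  assumes a: "0 < a" "a < 1"
  shows "(1 - (1 - 1 / K) powr (1 - a)) / (2 * (1 - a)) * s powr a \<le> renyi (ereal a) p S"
    and "renyi (ereal a) p S \<le> K / (1 - a) * s powr a"
proof -
  let ?T = "\<Sum>x\<in>S. p x powr a"
  define d where "d = 1 - (1 - 1 / K) powr (1 - a)"
  have renyi_a: "renyi (ereal a) p S = ln ?T / (1 - a)"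
    unfolding renyi_def using a by simp
  have "(1 - 1 / K) powr (1 - a) < 1 powr (1 - a)"
    using a one_le_K by (intro powr_less_mono2) (auto simp: field_simps)
  then have d: "0 < d" "d \<le> 1"
    by (simp_all add: d_def)
  have s_powr: "0 \<le> s powr a" "s powr a \<le> 1"
    using guess_error_nonneg mode_pos a by (auto intro: powr_le1)
  txt \<open>Since \<open>s \<le> 1 - 1/K\<close>, the power \<open>s powr a\<close> exceeds \<open>s\<close> by the fraction \<open>d\<close> of itself; with
    \<open>m \<le> m powr a\<close> this lifts the power sum a definite amount above 1.\<close>
  have "s = s powr a * s powr (1 - a)"
    using guess_error_nonneg by (simp add: powr_add[symmetric])
  also have "\<dots> \<le> s powr a * (1 - 1 / K) powr (1 - a)"
    using guess_error_le guess_error_nonneg a by (intro mult_left_mono powr_mono2) auto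
  finally have "s \<le> s powr a - d * s powr a"
    by (simp add: d_def algebra_simps)
  moreover have "m \<le> m powr a"
    using powr_mono'[of a 1 m] mode_pos mode_le_1 a by simp
  ultimately have T_lower: "1 + d * s powr a \<le> ?T"
    using sum_powr_split powr_le_sum_rest_powr[of a] a by simp
  have lifted_pos: "0 < 1 + d * s powr a"
    using d(1) s_powr(1) by (simp add: add_pos_nonneg)
  have "d * s powr a / 2 \<le> ln (1 + d * s powr a)"
    using d s_powr by (intro half_le_ln_one_plus) (auto simp: mult_le_one)
  also have "\<dots> \<le> ln ?T"
    using T_lower lifted_pos by (intro ln_mono) auto
  finally have ln_lower: "d * s powr a / 2 \<le> ln ?T" .
  have "m powr a \<le> 1"
    using mode_pos mode_le_1 a by (intro powr_le1) auto
  then have "?T \<le> 1 + K * s powr a"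
    using sum_powr_split sum_rest_powr_le[of a] a by simp
  then have "ln ?T \<le> ln (1 + K * s powr a)"
    using T_lower lifted_pos by (intro ln_mono) auto
  also have "\<dots> \<le> K * s powr a"
    using one_le_K s_powr by (intro ln_add_one_self_le_self) auto
  finally have ln_upper: "ln ?T \<le> K * s powr a" .
  have "d / (2 * (1 - a)) * s powr a = d * s powr a / 2 / (1 - a)"
    by simp
  also have "\<dots> \<le> ln ?T / (1 - a)"
    using ln_lower a by (intro divide_right_mono) auto
  finally show "(1 - (1 - 1 / K) powr (1 - a)) / (2 * (1 - a)) * s powr a \<le> renyi (ereal a) p S"
    unfolding renyi_a d_def .
  have "ln ?T / (1 - a) \<le> K * s powr a / (1 - a)"
    using ln_upper a by (intro divide_right_mono) auto
  then show "renyi (ereal a) p S \<le> K / (1 - a) * s powr a"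
    unfolding renyi_a by simp
qed

lemma mode_entropy_term_bounds: "s / K \<le> - (m * ln m)" "- (m * ln m) \<le> s"
proof -
  have neg_ln_mode: "s \<le> - ln m" "- ln m \<le> 1 / m - 1"
    using ln_le_minus_one[of m] ln_le_minus_one[of "1 / m"] mode_pos by (auto simp: ln_div)
  have "s * 1 \<le> s * (K * m)"
    using one_le_K_mode guess_error_nonneg by (rule mult_left_mono)
  then have "s / K \<le> m * s"
    using one_le_K by (subst pos_divide_le_eq) (auto simp: ac_simps)
  also have "\<dots> \<le> - (m * ln m)"
    using mult_left_mono[OF neg_ln_mode(1), of m] mode_pos by simp
  finally show "s / K \<le> - (m * ln m)" .
  have "- (m * ln m) \<le> m * (1 / m - 1)"
    using mult_left_mono[OF neg_ln_mode(2), of m] mode_pos by simp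
  also have "\<dots> = s"
    using mode_pos by (simp add: right_diff_distrib)
  finally show "- (m * ln m) \<le> s" .
qed

lemma rest_entropy_lower: "- (s * ln s) \<le> (\<Sum>x\<in>R. - (p x * ln (p x)))"
proof -
  have "- (s * ln s) = (\<Sum>x\<in>R. - (p x * ln s))"
    using sum_rest by (simp add: sum_negf sum_distrib_right[symmetric])
  also have "\<dots> \<le> (\<Sum>x\<in>R. - (p x * ln (p x)))"
  proof (rule sum_mono)
    fix x
    assume "x \<in> R"
    then have px: "0 < p x" "p x \<le> s"
      using positive rest_le by auto
    then have "ln (p x) \<le> ln s"
      by simp
    then show "- (p x * ln s) \<le> - (p x * ln (p x))"
      using px by (simp add: mult_left_mono)
  qed
  finally show ?thesis .
qed

lemma rest_entropy_upper: "(\<Sum>x\<in>R. - (p x * ln (p x))) \<le> - (s * ln s) + K * s"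
proof -
  have "(\<Sum>x\<in>R. - (p x * ln (p x))) \<le> (\<Sum>x\<in>R. - (p x * ln s) + s)"
  proof (rule sum_mono)
    fix x
    assume "x \<in> R"
    then have px: "0 < p x" "p x \<le> s"
      using positive rest_le by auto
    have "p x * (ln s - ln (p x)) \<le> p x * (s / p x - 1)"
      using ln_le_minus_one[of "s / p x"] px by (intro mult_left_mono) (auto simp: ln_div)
    also have "\<dots> \<le> s"
      using px by (simp add: field_simps)
    finally show "- (p x * ln (p x)) \<le> - (p x * ln s) + s"
      by (simp add: algebra_simps)
  qed
  also have "\<dots> = - (s * ln s) + real (card R) * s"
    using sum_rest by (simp add: sum.distrib sum_negf sum_subtractf sum_distrib_right[symmetric])
  also have "\<dots> \<le> - (s * ln s) + K * s"
    using card_rest_le guess_error_nonneg by (simp add: mult_right_mono)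
  finally show ?thesis .
qed

lemma shannon_bounds:
  shows "s * (1 - ln s) / K \<le> renyi 1 p S" and "renyi 1 p S \<le> (K + 1) * (s * (1 - ln s))"
proof -
  have renyi_1: "renyi 1 p S = - (m * ln m) + (\<Sum>x\<in>R. - (p x * ln (p x)))"
    unfolding renyi_def using finite_support mode_in by (simp add: sum.remove sum_negf)
  have "- (s * ln s) \<ge> 0"
    using guess_error_nonneg mode_pos by (cases "s = 0") (auto simp: mult_nonneg_nonpos)
  have div_K: "w / K \<le> w" if "0 \<le> w" for w
    using mult_left_mono[OF one_le_K that] one_le_K by (simp add: pos_divide_le_eq)
  have "t * (1 - ln t) / K = t / K + (- (t * ln t)) / K" for t
    by (simp add: right_diff_distrib diff_divide_distrib)
  then have "s * (1 - ln s) / K = s / K + (- (s * ln s)) / K" .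
  also have "\<dots> \<le> s / K + - (s * ln s)"
    using div_K[OF \<open>- (s * ln s) \<ge> 0\<close>] by simp
  finally show "s * (1 - ln s) / K \<le> renyi 1 p S"
    using renyi_1 mode_entropy_term_bounds(1) rest_entropy_lower by linarith
  have "s + (- (s * ln s) + K * s) \<le> (K + 1) * (s * (1 - ln s))"
    using \<open>- (s * ln s) \<ge> 0\<close> one_le_K by (simp add: algebra_simps mult_nonneg_nonneg)
  then show "renyi 1 p S \<le> (K + 1) * (s * (1 - ln s))"
    using renyi_1 mode_entropy_term_bounds(2) rest_entropy_upper by linarith
qed

end

lemma shannon_gauge_ratio_le:
  fixes s1 s2 :: real
  assumes "0 \<le> s1" "s1 \<le> 1" "0 < s2" "s2 \<le> 1"
  shows "s1 * (1 - ln s1) \<le> 3 * max (s1 / s2) (sqrt (s1 / s2)) * (s2 * (1 - ln s2))"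
proof (cases "s1 = 0")
  case False
  define r where "r = s1 / s2"
  define L where "L = 1 - ln s2"
  have "0 < r" "1 \<le> L"
    using assms False by (auto simp: r_def L_def)
  have "s1 * (1 - ln s1) = r * (L - ln r) * s2"
    using assms False by (simp add: r_def L_def ln_div)
  also have "\<dots> \<le> 3 * max r (sqrt r) * (s2 * L)"
  proof (cases "1 \<le> r")
    case True
    then have "r * (L - ln r) \<le> r * L"
      using \<open>0 < r\<close> by (intro mult_left_mono) auto
    also have "\<dots> \<le> 3 * max r (sqrt r) * L"
      using \<open>1 \<le> L\<close> \<open>0 < r\<close> by (intro mult_right_mono) auto
    finally show ?thesis
      using \<open>0 < s2\<close> by (simp add: mult_right_mono mult.assoc mult.left_commute)
  next
    case False
    have "L - ln r \<le> L * (1 - ln r)"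
      using \<open>1 \<le> L\<close> False \<open>0 < r\<close> mult_left_mono[of 1 L "- ln r"] by (simp add: right_diff_distrib)
    then have "r * (L - ln r) \<le> (r + r * - ln r) * L"
      using \<open>0 < r\<close> mult_left_mono[of _ _ r] by (simp add: algebra_simps)
    also have "\<dots> \<le> 3 * max r (sqrt r) * L"
      using mult_neg_ln_le_two_sqrt[OF \<open>0 < r\<close>] le_sqrt_if_le_1[of r] False \<open>0 < r\<close> \<open>1 \<le> L\<close>
      by (intro mult_right_mono) auto
    finally show ?thesis
      using \<open>0 < s2\<close> by (simp add: mult_right_mono mult.assoc mult.left_commute)
  qed
  finally show ?thesis
    by (simp add: r_def L_def)
qed (use assms in \<open>auto intro!: mult_nonneg_nonneg\<close>)

lemma shannon_gauge_ratio_ge: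
  fixes s1 s2 :: real
  assumes "0 \<le> s1" "s1 \<le> 1" "0 < s2" "s2 \<le> 1"
  shows "min (s1 / s2) (sqrt (s1 / s2)) / 3 * (s2 * (1 - ln s2)) \<le> s1 * (1 - ln s1)"
proof (cases "s1 = 0")
  case False
  define r where "r = s1 / s2"
  define L where "L = 1 - ln s1"
  have "0 < r" "1 \<le> L"
    using assms False by (auto simp: r_def L_def)
  have L2: "L + ln r = 1 - ln s2"
    using assms False by (simp add: r_def L_def ln_div)
  then have "1 \<le> L + ln r"
    using assms by simp
  have "min r (sqrt r) / 3 * (L + ln r) \<le> r * L"
  proof (cases "r \<le> 1")
    case True
    then have "min r (sqrt r) / 3 * (L + ln r) \<le> r * (L + ln r)"
      using \<open>0 < r\<close> \<open>1 \<le> L + ln r\<close> by (intro mult_right_mono) auto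
    also have "\<dots> \<le> r * L"
      using True \<open>0 < r\<close> by (intro mult_left_mono) auto
    finally show ?thesis .
  next
    case False
    then have "1 \<le> sqrt r"
      by simp
    have "1 * (2 * sqrt r) \<le> L * (2 * sqrt r)"
      using \<open>1 \<le> L\<close> \<open>0 < r\<close> by (intro mult_right_mono) auto
    then have "L + ln r \<le> L * (1 + 2 * sqrt r)"
      using ln_le_two_sqrt[OF \<open>0 < r\<close>] unfolding distrib_left by linarith
    also have "\<dots> \<le> L * (3 * sqrt r)"
      using \<open>1 \<le> L\<close> \<open>1 \<le> sqrt r\<close> by (intro mult_left_mono) auto
    finally have "sqrt r / 3 * (L + ln r) \<le> sqrt r / 3 * (L * (3 * sqrt r))"
      using \<open>0 < r\<close> by (intro mult_left_mono) auto
    also have "\<dots> = r * L"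
      using \<open>0 < r\<close> by simp
    moreover have "min r (sqrt r) / 3 * (L + ln r) \<le> sqrt r / 3 * (L + ln r)"
      using \<open>1 \<le> L + ln r\<close> by (intro mult_right_mono) auto
    ultimately show ?thesis
      by linarith
  qed
  then have "min r (sqrt r) / 3 * (1 - ln s2) * s2 \<le> r * L * s2"
    unfolding L2 using \<open>0 < s2\<close> by (intro mult_right_mono) auto
  moreover have "r * s2 = s1"
    using assms by (simp add: r_def)
  ultimately show ?thesis
    unfolding r_def[symmetric] L_def[symmetric] by (simp add: ac_simps)
qed simp

definition renyi_gauge :: "ereal \<Rightarrow> real \<Rightarrow> real" where
  "renyi_gauge \<alpha> s =
     (if \<alpha> = 1 then s * (1 - ln s) else if \<alpha> < 1 then s powr real_of_ereal \<alpha> else s)"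

lemma shannon_gauge_pos: "0 < s \<Longrightarrow> s \<le> 1 \<Longrightarrow> 0 < s * (1 - ln s)" for s :: real
  using ln_le_zero_iff[of s] by (intro mult_pos_pos) linarith+

lemma renyi_gauge_pos: "0 < s \<Longrightarrow> s \<le> 1 \<Longrightarrow> 0 < renyi_gauge \<alpha> s"
  by (simp add: renyi_gauge_def shannon_gauge_pos)

lemma renyi_gauge_nonneg: "0 \<le> s \<Longrightarrow> s \<le> 1 \<Longrightarrow> 0 \<le> renyi_gauge \<alpha> s"
  using renyi_gauge_pos[of s \<alpha>] by (cases "s = 0") (auto simp: renyi_gauge_def)

lemma renyi_gauge_ratio_bounds:
  assumes "0 < \<alpha>"
  obtains c C \<gamma> :: real where "0 < c" "0 < C" "0 < \<gamma>"
    and "\<And>s1 s2. 0 \<le> s1 \<Longrightarrow> s1 \<le> 1 \<Longrightarrow> 0 < s2 \<Longrightarrow> s2 \<le> 1 \<Longrightarrow>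
      c * min (s1 / s2) ((s1 / s2) powr \<gamma>) \<le> renyi_gauge \<alpha> s1 / renyi_gauge \<alpha> s2 \<and>
      renyi_gauge \<alpha> s1 / renyi_gauge \<alpha> s2 \<le> C * max (s1 / s2) ((s1 / s2) powr \<gamma>)"
proof -
  consider (one) "\<alpha> = 1" | (below) a where "\<alpha> = ereal a" "0 < a" "a < 1" | (above) "\<alpha> \<noteq> 1" "\<not> \<alpha> < 1"
    using assms by (cases \<alpha>) (auto simp: one_ereal_def)
  then show ?thesis
  proof cases
    case one
    show ?thesis
    proof (rule that[of "1 / 3" 3 "1 / 2"])
      fix s1 s2 :: real
      assume s: "0 \<le> s1" "s1 \<le> 1" "0 < s2" "s2 \<le> 1"
      have "0 < s2 * (1 - ln s2)"
        using s by (intro shannon_gauge_pos)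
      then show "1 / 3 * min (s1 / s2) ((s1 / s2) powr (1 / 2)) \<le> renyi_gauge \<alpha> s1 / renyi_gauge \<alpha> s2 \<and>
          renyi_gauge \<alpha> s1 / renyi_gauge \<alpha> s2 \<le> 3 * max (s1 / s2) ((s1 / s2) powr (1 / 2))"
        using shannon_gauge_ratio_le[OF s] shannon_gauge_ratio_ge[OF s] s one
        by (simp add: renyi_gauge_def powr_half_sqrt pos_le_divide_eq pos_divide_le_eq)
    qed auto
  next
    case below
    show ?thesis
    proof (rule that[of 1 1 a])
      fix s1 s2 :: real
      assume s: "0 \<le> s1" "s1 \<le> 1" "0 < s2" "s2 \<le> 1"
      then show "1 * min (s1 / s2) ((s1 / s2) powr a) \<le> renyi_gauge \<alpha> s1 / renyi_gauge \<alpha> s2 \<and>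
          renyi_gauge \<alpha> s1 / renyi_gauge \<alpha> s2 \<le> 1 * max (s1 / s2) ((s1 / s2) powr a)"
        using below by (simp add: renyi_gauge_def powr_divide)
    qed (use below in auto)
  next
    case above
    show ?thesis
    proof (rule that[of 1 1 1])
      fix s1 s2 :: real
      assume s: "0 \<le> s1" "s1 \<le> 1" "0 < s2" "s2 \<le> 1"
      then show "1 * min (s1 / s2) ((s1 / s2) powr 1) \<le> renyi_gauge \<alpha> s1 / renyi_gauge \<alpha> s2 \<and>
          renyi_gauge \<alpha> s1 / renyi_gauge \<alpha> s2 \<le> 1 * max (s1 / s2) ((s1 / s2) powr 1)"
        using above by (auto simp: renyi_gauge_def)
    qed auto
  qed
qed

lemma renyi_gauge_bounds:
  fixes K :: real
  assumes "0 < \<alpha>" "1 \<le> K"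
  obtains lo hi where "0 < lo" "0 < hi"
    and "\<And>(p :: 'a \<Rightarrow> real) S mode. bounded_distribution p S mode K \<Longrightarrow>
      lo * renyi_gauge \<alpha> (guess_error p S) \<le> renyi \<alpha> p S \<and>
      renyi \<alpha> p S \<le> hi * renyi_gauge \<alpha> (guess_error p S)"
proof -
  consider (infinity) "\<alpha> = \<infinity>" | (one) "\<alpha> = 1" | (above) a where "\<alpha> = ereal a" "1 < a"
    | (below) a where "\<alpha> = ereal a" "0 < a" "a < 1"
    using assms(1) by (cases \<alpha>) (auto simp: one_ereal_def, metis linorder_neqE_linordered_idom)
  then show ?thesis
  proof cases
    case infinity
    show ?thesis
    proof (rule that[of 1 K])
      fix p :: "'a \<Rightarrow> real" and S mode
      assume "bounded_distribution p S mode K"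
      then interpret bounded_distribution p S mode K .
      show "1 * renyi_gauge \<alpha> (guess_error p S) \<le> renyi \<alpha> p S \<and>
          renyi \<alpha> p S \<le> K * renyi_gauge \<alpha> (guess_error p S)"
        using renyi_infinity_bounds infinity by (simp add: renyi_gauge_def guess_error_eq)
    qed (use assms in simp_all)
  next
    case one
    show ?thesis
    proof (rule that[of "1 / K" "K + 1"])
      fix p :: "'a \<Rightarrow> real" and S mode
      assume "bounded_distribution p S mode K"
      then interpret bounded_distribution p S mode K .
      show "1 / K * renyi_gauge \<alpha> (guess_error p S) \<le> renyi \<alpha> p S \<and>
          renyi \<alpha> p S \<le> (K + 1) * renyi_gauge \<alpha> (guess_error p S)"
        using shannon_bounds one by (simp add: renyi_gauge_def guess_error_eq)
    qed (use assms in simp_all)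
  next
    case above
    show ?thesis
    proof (rule that[of 1 "a / (a - 1) * K"])
      fix p :: "'a \<Rightarrow> real" and S mode
      assume "bounded_distribution p S mode K"
      then interpret bounded_distribution p S mode K .
      have "a / (a - 1) * renyi \<infinity> p S \<le> a / (a - 1) * (K * s)"
        using renyi_infinity_bounds(2) above(2) by (intro mult_left_mono) auto
      then have "renyi \<alpha> p S \<le> a / (a - 1) * (K * s)"
        using renyi_above_1_bounds(2)[OF above(2)] unfolding above(1) by linarith
      then show "1 * renyi_gauge \<alpha> (guess_error p S) \<le> renyi \<alpha> p S \<and>
          renyi \<alpha> p S \<le> a / (a - 1) * K * renyi_gauge \<alpha> (guess_error p S)"
        using renyi_above_1_bounds(1)[OF above(2)] renyi_infinity_bounds(1) above
        by (simp add: renyi_gauge_def guess_error_eq)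
    qed (use assms above in simp_all)
  next
    case below
    define lo where "lo = (1 - (1 - 1 / K) powr (1 - a)) / (2 * (1 - a))"
    have "(1 - 1 / K) powr (1 - a) < 1 powr (1 - a)"
      using below assms(2) by (intro powr_less_mono2) (auto simp: field_simps)
    then have "0 < lo"
      using below by (simp add: lo_def)
    then show ?thesis
    proof (rule that[of lo "K / (1 - a)"])
      fix p :: "'a \<Rightarrow> real" and S mode
      assume "bounded_distribution p S mode K"
      then interpret bounded_distribution p S mode K .
      show "lo * renyi_gauge \<alpha> (guess_error p S) \<le> renyi \<alpha> p S \<and>
          renyi \<alpha> p S \<le> K / (1 - a) * renyi_gauge \<alpha> (guess_error p S)"
        using renyi_below_1_bounds[OF below(2,3)] below
        by (simp add: renyi_gauge_def guess_error_eq lo_def one_ereal_def)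
    qed (use assms below in simp)
  qed
qed

section \<open>Output distributions of programs\<close>

lemma outputs_nonempty: "0 < N \<Longrightarrow> outputs F N \<noteq> {}"
  by (auto simp: outputs_def)

lemma finite_outputs: "finite (outputs F N)"
  by (simp add: outputs_def)

lemma out_dist_pos:
  assumes "x \<in> outputs F N"
  shows "0 < out_dist F N x"
proof -
  obtain a where "a < N" "F N a = x"
    using assms by (auto simp: outputs_def)
  then have "0 < card {a \<in> {..<N}. F N a = x}"
    by (auto simp: card_gt_0_iff)
  with \<open>a < N\<close> show ?thesis
    by (simp add: out_dist_def)
qed

lemma support_out_dist: "{x. out_dist F N x \<noteq> 0} = outputs F N"
  using out_dist_pos[of _ F N] by (force simp: out_dist_def outputs_def)

lemma sum_out_dist: "0 < N \<Longrightarrow> sum (out_dist F N) (outputs F N) = 1"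
proof -
  assume "0 < N"
  have "real N = (\<Sum>x\<in>F N ` {..<N}. real (card {a \<in> {..<N}. F N a = x}))"
    using card_eq_sum[of "{..<N}"] sum.image_gen[of "{..<N}" "\<lambda>_. 1 :: real" "F N"] by simp
  then show ?thesis
    using \<open>0 < N\<close> by (simp add: out_dist_def outputs_def sum_divide_distrib[symmetric])
qed

lemma card_outputs_bound: "finite_order F \<Longrightarrow> \<exists>K. \<forall>N>0. card (outputs F N) \<le> K"
  by (simp add: finite_order_def support_out_dist)

lemma bounded_distribution_out_dist:
  assumes "0 < N" "real (card (outputs F N)) \<le> K"
  obtains mode where "bounded_distribution (out_dist F N) (outputs F N) mode K"
proof -
  have "Max (out_dist F N ` outputs F N) \<in> out_dist F N ` outputs F N"
    using finite_outputs outputs_nonempty[OF assms(1)] by (intro Max_in) auto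
  then obtain mode where "mode \<in> outputs F N" "out_dist F N mode = Max (out_dist F N ` outputs F N)"
    by (metis imageE)
  then show ?thesis
    using assms finite_outputs out_dist_pos sum_out_dist
    by (intro that) (unfold_locales, auto)
qed

lemma quotient_bounds:
  fixes A1 A2 u1 u2 lo1 hi1 lo2 hi2 :: real
  assumes "lo1 * u1 \<le> A1" "A1 \<le> hi1 * u1" "lo2 * u2 \<le> A2" "A2 \<le> hi2 * u2"
    and "0 \<le> lo1" "0 < lo2" "0 \<le> u1" "0 < u2"
  shows "lo1 / hi2 * (u1 / u2) \<le> A1 / A2" and "A1 / A2 \<le> hi1 / lo2 * (u1 / u2)"
proof -
  have "0 < lo2 * u2" "0 \<le> lo1 * u1"
    using assms by simp_all
  then have "0 < A2" "0 \<le> A1"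
    using assms by linarith+
  have "lo1 * u1 / (hi2 * u2) \<le> A1 / A2"
    using assms \<open>0 < A2\<close> \<open>0 \<le> A1\<close> by (intro frac_le) auto
  then show "lo1 / hi2 * (u1 / u2) \<le> A1 / A2"
    by simp
  have "A1 / A2 \<le> hi1 * u1 / (lo2 * u2)"
    using assms \<open>0 < lo2 * u2\<close> \<open>0 \<le> A1\<close> by (intro frac_le) auto
  then show "A1 / A2 \<le> hi1 / lo2 * (u1 / u2)"
    by simp
qed

lemma renyi_ratio_power_bounds:
  fixes K :: real
  assumes "0 < \<alpha>" "1 \<le> K"
  obtains c C \<gamma> :: real where "0 < c" "0 < C" "0 < \<gamma>"
    and "\<And>(p1 :: 'a \<Rightarrow> real) S1 mode1 (p2 :: 'b \<Rightarrow> real) S2 mode2.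
      bounded_distribution p1 S1 mode1 K \<Longrightarrow> bounded_distribution p2 S2 mode2 K \<Longrightarrow> 2 \<le> card S2 \<Longrightarrow>
      0 \<le> guess_error p1 S1 / guess_error p2 S2 \<and>
      c * min (guess_error p1 S1 / guess_error p2 S2) ((guess_error p1 S1 / guess_error p2 S2) powr \<gamma>)
        \<le> renyi \<alpha> p1 S1 / renyi \<alpha> p2 S2 \<and>
      renyi \<alpha> p1 S1 / renyi \<alpha> p2 S2
        \<le> C * max (guess_error p1 S1 / guess_error p2 S2) ((guess_error p1 S1 / guess_error p2 S2) powr \<gamma>)"
proof -
  obtain lo1 hi1 where lohi1: "0 < lo1" "0 < hi1" and bounds1: "\<And>(p :: 'a \<Rightarrow> real) S mode.
      bounded_distribution p S mode K \<Longrightarrow> lo1 * renyi_gauge \<alpha> (guess_error p S) \<le> renyi \<alpha> p S \<and>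
        renyi \<alpha> p S \<le> hi1 * renyi_gauge \<alpha> (guess_error p S)"
    using renyi_gauge_bounds[OF assms] by blast
  obtain lo2 hi2 where lohi2: "0 < lo2" "0 < hi2" and bounds2: "\<And>(p :: 'b \<Rightarrow> real) S mode.
      bounded_distribution p S mode K \<Longrightarrow> lo2 * renyi_gauge \<alpha> (guess_error p S) \<le> renyi \<alpha> p S \<and>
        renyi \<alpha> p S \<le> hi2 * renyi_gauge \<alpha> (guess_error p S)"
    using renyi_gauge_bounds[OF assms] by blast
  obtain c C \<gamma> where cC: "0 < c" "0 < C" "0 < \<gamma>" and ratio: "\<And>s1 s2. 0 \<le> s1 \<Longrightarrow> s1 \<le> 1 \<Longrightarrow>
      0 < s2 \<Longrightarrow> s2 \<le> 1 \<Longrightarrow>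
      c * min (s1 / s2) ((s1 / s2) powr \<gamma>) \<le> renyi_gauge \<alpha> s1 / renyi_gauge \<alpha> s2 \<and>
      renyi_gauge \<alpha> s1 / renyi_gauge \<alpha> s2 \<le> C * max (s1 / s2) ((s1 / s2) powr \<gamma>)"
    using renyi_gauge_ratio_bounds[OF \<open>0 < \<alpha>\<close>] by blast
  show ?thesis
  proof (rule that[of "lo1 / hi2 * c" "hi1 / lo2 * C" \<gamma>])
    show "0 < lo1 / hi2 * c" "0 < hi1 / lo2 * C" "0 < \<gamma>"
      using lohi1 lohi2 cC by simp_all
    fix p1 :: "'a \<Rightarrow> real" and S1 mode1 and p2 :: "'b \<Rightarrow> real" and S2 mode2
    assume d1: "bounded_distribution p1 S1 mode1 K" and d2: "bounded_distribution p2 S2 mode2 K"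
      and "2 \<le> card S2"
    interpret d1: bounded_distribution p1 S1 mode1 K
      by (rule d1)
    interpret d2: bounded_distribution p2 S2 mode2 K
      by (rule d2)
    define s1 where "s1 = guess_error p1 S1"
    define s2 where "s2 = guess_error p2 S2"
    have s: "0 \<le> s1" "s1 \<le> 1" "0 < s2" "s2 \<le> 1"
      using d1.guess_error_nonneg d1.mode_pos d2.guess_error_pos[OF \<open>2 \<le> card S2\<close>] d2.mode_pos
      by (simp_all add: s1_def s2_def d1.guess_error_eq d2.guess_error_eq)
    note quotient = quotient_bounds[OF bounds1[OF d1, THEN conjunct1] bounds1[OF d1, THEN conjunct2]
        bounds2[OF d2, THEN conjunct1] bounds2[OF d2, THEN conjunct2], folded s1_def s2_def]
    have "lo1 / hi2 * c * min (s1 / s2) ((s1 / s2) powr \<gamma>)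
        \<le> lo1 / hi2 * (renyi_gauge \<alpha> s1 / renyi_gauge \<alpha> s2)"
      unfolding mult.assoc using ratio[OF s] lohi1 lohi2 by (intro mult_left_mono) auto
    also have "\<dots> \<le> renyi \<alpha> p1 S1 / renyi \<alpha> p2 S2"
      using quotient(1) lohi1 lohi2 s by (simp add: renyi_gauge_nonneg renyi_gauge_pos)
    finally have lower: "lo1 / hi2 * c * min (s1 / s2) ((s1 / s2) powr \<gamma>) \<le> renyi \<alpha> p1 S1 / renyi \<alpha> p2 S2" .
    have "renyi \<alpha> p1 S1 / renyi \<alpha> p2 S2 \<le> hi1 / lo2 * (renyi_gauge \<alpha> s1 / renyi_gauge \<alpha> s2)"
      using quotient(2) lohi1 lohi2 s by (simp add: renyi_gauge_nonneg renyi_gauge_pos)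
    also have "\<dots> \<le> hi1 / lo2 * C * max (s1 / s2) ((s1 / s2) powr \<gamma>)"
      unfolding mult.assoc using ratio[OF s] lohi1 lohi2 by (intro mult_left_mono) auto
    finally show "0 \<le> s1 / s2 \<and>
        lo1 / hi2 * c * min (s1 / s2) ((s1 / s2) powr \<gamma>) \<le> renyi \<alpha> p1 S1 / renyi \<alpha> p2 S2 \<and>
        renyi \<alpha> p1 S1 / renyi \<alpha> p2 S2 \<le> hi1 / lo2 * C * max (s1 / s2) ((s1 / s2) powr \<gamma>)"
      using lower s by simp
  qed
qed

lemma IL_ratio_power_comparable:
  fixes F1 :: "nat \<Rightarrow> nat \<Rightarrow> 'a" and F2 :: "nat \<Rightarrow> nat \<Rightarrow> 'b"
  assumes "finite_order F1" and "finite_order F2"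
    and card2: "\<forall>\<^sub>F N in sequentially. 2 \<le> card (outputs F2 N)" and "0 < \<alpha>"
  shows "power_comparable sequentially (\<lambda>N. IL \<alpha> F1 N / IL \<alpha> F2 N)
           (\<lambda>N. guess_error (out_dist F1 N) (outputs F1 N) / guess_error (out_dist F2 N) (outputs F2 N))"
proof -
  obtain K1 K2 where K1: "\<forall>N>0. card (outputs F1 N) \<le> K1" and K2: "\<forall>N>0. card (outputs F2 N) \<le> K2"
    using card_outputs_bound assms(1,2) by metis
  define K where "K = real (max 1 (max K1 K2))"
  have "1 \<le> K"
    by (simp add: K_def)
  obtain c C \<gamma> where "0 < c" "0 < C" "0 < \<gamma>" and bounds: "\<And>(p1 :: 'a \<Rightarrow> real) S1 mode1
      (p2 :: 'b \<Rightarrow> real) S2 mode2.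
      bounded_distribution p1 S1 mode1 K \<Longrightarrow> bounded_distribution p2 S2 mode2 K \<Longrightarrow> 2 \<le> card S2 \<Longrightarrow>
      0 \<le> guess_error p1 S1 / guess_error p2 S2 \<and>
      c * min (guess_error p1 S1 / guess_error p2 S2) ((guess_error p1 S1 / guess_error p2 S2) powr \<gamma>)
        \<le> renyi \<alpha> p1 S1 / renyi \<alpha> p2 S2 \<and>
      renyi \<alpha> p1 S1 / renyi \<alpha> p2 S2
        \<le> C * max (guess_error p1 S1 / guess_error p2 S2) ((guess_error p1 S1 / guess_error p2 S2) powr \<gamma>)"
    using renyi_ratio_power_bounds[OF \<open>0 < \<alpha>\<close> \<open>1 \<le> K\<close>] by blast
  define s1 where "s1 N = guess_error (out_dist F1 N) (outputs F1 N)" for N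
  define s2 where "s2 N = guess_error (out_dist F2 N) (outputs F2 N)" for N
  have "\<forall>\<^sub>F N in sequentially. 0 \<le> s1 N / s2 N \<and>
      c * min (s1 N / s2 N) ((s1 N / s2 N) powr \<gamma>) \<le> IL \<alpha> F1 N / IL \<alpha> F2 N \<and>
      IL \<alpha> F1 N / IL \<alpha> F2 N \<le> C * max (s1 N / s2 N) ((s1 N / s2 N) powr \<gamma>)"
    using eventually_gt_at_top[of 0] card2
  proof eventually_elim
    case (elim N)
    have "real (card (outputs F1 N)) \<le> K" "real (card (outputs F2 N)) \<le> K"
      using K1[rule_format, OF \<open>0 < N\<close>] K2[rule_format, OF \<open>0 < N\<close>]
      by (simp_all add: K_def le_max_iff_disj)
    then obtain mode1 mode2
      where "bounded_distribution (out_dist F1 N) (outputs F1 N) mode1 K"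
        and "bounded_distribution (out_dist F2 N) (outputs F2 N) mode2 K"
      using bounded_distribution_out_dist[OF \<open>0 < N\<close>] by metis
    then show ?case
      using bounds elim(2) unfolding IL_def s1_def s2_def by blast
  qed
  then have "power_comparable sequentially (\<lambda>N. IL \<alpha> F1 N / IL \<alpha> F2 N) (\<lambda>N. s1 N / s2 N)"
    using \<open>0 < c\<close> \<open>0 < C\<close> \<open>0 < \<gamma>\<close> by (intro power_comparable_if_bounds)
  then show ?thesis
    by (simp only: s1_def s2_def)
qed

lemma ex_iff_all_if_independent:
  fixes P :: "ereal \<Rightarrow> bool"
  assumes "\<And>\<alpha>. 0 < \<alpha> \<Longrightarrow> P \<alpha> \<longleftrightarrow> Q"
  shows "(\<exists>\<alpha>>0. P \<alpha>) \<longleftrightarrow> (\<forall>\<beta>>0. P \<beta>)"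
proof -
  have "(0 :: ereal) < 1"
    by simp
  then show ?thesis
    using assms by blast
qed

theorem proposition2:
  fixes F1 :: "nat \<Rightarrow> nat \<Rightarrow> 'a" and F2 :: "nat \<Rightarrow> nat \<Rightarrow> 'b"
    and f g :: "ereal \<Rightarrow> ereal"
  assumes "finite_order F1" and "finite_order F2"
    and "eventually (\<lambda>N. card (outputs F2 N) \<ge> 2) sequentially"
    and f_def: "\<And>\<alpha>. f \<alpha> = limsup (\<lambda>N. ereal (IL \<alpha> F1 N / IL \<alpha> F2 N))"
    and g_def: "\<And>\<alpha>. g \<alpha> = liminf (\<lambda>N. ereal (IL \<alpha> F1 N / IL \<alpha> F2 N))"
  shows "((\<exists>\<alpha>>0. f \<alpha> = 0) \<longleftrightarrow> (\<forall>\<beta>>0. f \<beta> = 0))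
       \<and> ((\<exists>\<alpha>>0. f \<alpha> = \<infinity>) \<longleftrightarrow> (\<forall>\<beta>>0. f \<beta> = \<infinity>))
       \<and> ((\<exists>\<alpha>>0. 0 < f \<alpha> \<and> f \<alpha> < \<infinity>) \<longleftrightarrow> (\<forall>\<beta>>0. 0 < f \<beta> \<and> f \<beta> < \<infinity>))
       \<and> ((\<exists>\<alpha>>0. g \<alpha> = 0) \<longleftrightarrow> (\<forall>\<beta>>0. g \<beta> = 0))
       \<and> ((\<exists>\<alpha>>0. g \<alpha> = \<infinity>) \<longleftrightarrow> (\<forall>\<beta>>0. g \<beta> = \<infinity>))
       \<and> ((\<exists>\<alpha>>0. 0 < g \<alpha> \<and> g \<alpha> < \<infinity>) \<longleftrightarrow> (\<forall>\<beta>>0. 0 < g \<beta> \<and> g \<beta> < \<infinity>))"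
proof -
  define r where "r N = guess_error (out_dist F1 N) (outputs F1 N) / guess_error (out_dist F2 N) (outputs F2 N)"
    for N
  define L where "L = limsup (\<lambda>N. ereal (r N))"
  define l where "l = liminf (\<lambda>N. ereal (r N))"
  have ereal_pos_finite: "0 < z \<and> z < \<infinity> \<longleftrightarrow> z \<noteq> 0 \<and> z \<noteq> \<infinity>" if "0 \<le> z" for z :: ereal
    using that by (auto simp: less_le)
  have f: "f \<alpha> = 0 \<longleftrightarrow> L = 0" "f \<alpha> = \<infinity> \<longleftrightarrow> L = \<infinity>" "0 < f \<alpha> \<and> f \<alpha> < \<infinity> \<longleftrightarrow> L \<noteq> 0 \<and> L \<noteq> \<infinity>"
    and g: "g \<alpha> = 0 \<longleftrightarrow> l = 0" "g \<alpha> = \<infinity> \<longleftrightarrow> l = \<infinity>" "0 < g \<alpha> \<and> g \<alpha> < \<infinity> \<longleftrightarrow> l \<noteq> 0 \<and> l \<noteq> \<infinity>"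
    if "0 < \<alpha>" for \<alpha>
  proof -
    note comparable = power_comparable_Limsup_Liminf[OF
        IL_ratio_power_comparable[OF assms(1-3) that, folded r_def] sequentially_bot,
        folded f_def g_def L_def l_def]
    show "f \<alpha> = 0 \<longleftrightarrow> L = 0" "f \<alpha> = \<infinity> \<longleftrightarrow> L = \<infinity>" "g \<alpha> = 0 \<longleftrightarrow> l = 0" "g \<alpha> = \<infinity> \<longleftrightarrow> l = \<infinity>"
      by (fact comparable)+
    show "0 < f \<alpha> \<and> f \<alpha> < \<infinity> \<longleftrightarrow> L \<noteq> 0 \<and> L \<noteq> \<infinity>"
      by (simp only: ereal_pos_finite[OF comparable(5)] comparable(1,2))
    show "0 < g \<alpha> \<and> g \<alpha> < \<infinity> \<longleftrightarrow> l \<noteq> 0 \<and> l \<noteq> \<infinity>"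
      by (simp only: ereal_pos_finite[OF comparable(6)] comparable(3,4))
  qed
  show ?thesis
    by (intro conjI ex_iff_all_if_independent) (erule f g)+
qed

end
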